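(* Let $F=(A,R)$ be an abstract argumentation framework, $S$ an initial set of $F$, and $(A',R')$ the strongly connected component of $F$ containing $S$. (1) If $S$ is unattacked then $|A'|=1$. (2) If $S$ is challenged or unchallenged then $|A'|>1$. (3) If $S$ is challenged and $S'$ is an initial set of $F$ with $S'\to S$, then the strongly connected component containing $S'$ equals the one containing $S$.
   Context: An abstract argumentation framework is a pair $F=(A,R)$ with $A$ finite and $R\subseteq A\times A$ ($a\to b$ means $(a,b)\in R$). $S^+=\{a\mid\exists b\in S:b\to a\}$, $S^-=\{a\mid\exists b\in S: a\to b\}$, and $S\to S'$ means $S^+\cap S'\neq\emptyset$. $S$ is admissible if conflict-free and every attacker of an element of $S$ is attacked by some element of $S$. An initial set is a non-empty admissible set with no non-empty admissible proper subset. An initial set $S$ is unattacked if $S^-=\emptyset$; unchallenged if $S^-\neq\emptyset$ and no initial set $S'$ has $S'\to S$; challenged if some initial set $S'$ has $S'\to S$. A strongly connected component of $F$ is a maximal $A'\subseteq A$ (with induced attacks) such that any two arguments in $A'$ are joined by a directed path within $A'$; every initial set is contained in a single strongly connected component. *)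

theory Defs
  imports Main
begin

text \<open>An argumentation framework is a finite set A with an attack relation R \<subseteq> A \<times> A;
  (a,b) \<in> R means a attacks b.\<close>

definition AF :: "'a set \<Rightarrow> ('a \<times> 'a) set \<Rightarrow> bool" where
  "AF A R \<longleftrightarrow> finite A \<and> R \<subseteq> A \<times> A"

definition plus_set :: "('a \<times> 'a) set \<Rightarrow> 'a set \<Rightarrow> 'a set" where
  "plus_set R S = {a. \<exists>b\<in>S. (b, a) \<in> R}"

definition minus_set :: "('a \<times> 'a) set \<Rightarrow> 'a set \<Rightarrow> 'a set" where
  "minus_set R S = {a. \<exists>b\<in>S. (a, b) \<in> R}"

definition attacks_set :: "('a \<times> 'a) set \<Rightarrow> 'a set \<Rightarrow> 'a set \<Rightarrow> bool" where
  "attacks_set R S S' \<longleftrightarrow> plus_set R S \<inter> S' \<noteq> {}"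

definition conflict_free :: "('a \<times> 'a) set \<Rightarrow> 'a set \<Rightarrow> bool" where
  "conflict_free R S \<longleftrightarrow> (\<forall>a\<in>S. \<forall>b\<in>S. (a, b) \<notin> R)"

definition admissible :: "'a set \<Rightarrow> ('a \<times> 'a) set \<Rightarrow> 'a set \<Rightarrow> bool" where
  "admissible A R S \<longleftrightarrow> S \<subseteq> A \<and> conflict_free R S \<and>
     (\<forall>a\<in>S. \<forall>b. (b, a) \<in> R \<longrightarrow> (\<exists>c\<in>S. (c, b) \<in> R))"

definition initial :: "'a set \<Rightarrow> ('a \<times> 'a) set \<Rightarrow> 'a set \<Rightarrow> bool" where
  "initial A R S \<longleftrightarrow> S \<noteq> {} \<and> admissible A R S \<and>
     \<not> (\<exists>T. T \<noteq> {} \<and> T \<subset> S \<and> admissible A R T)"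

definition unattacked :: "'a set \<Rightarrow> ('a \<times> 'a) set \<Rightarrow> 'a set \<Rightarrow> bool" where
  "unattacked A R S \<longleftrightarrow> initial A R S \<and> minus_set R S = {}"

definition challenged :: "'a set \<Rightarrow> ('a \<times> 'a) set \<Rightarrow> 'a set \<Rightarrow> bool" where
  "challenged A R S \<longleftrightarrow> initial A R S \<and> (\<exists>S'. initial A R S' \<and> attacks_set R S' S)"

definition unchallenged :: "'a set \<Rightarrow> ('a \<times> 'a) set \<Rightarrow> 'a set \<Rightarrow> bool" where
  "unchallenged A R S \<longleftrightarrow> initial A R S \<and> minus_set R S \<noteq> {} \<and>
     \<not> (\<exists>S'. initial A R S' \<and> attacks_set R S' S)"

definition strongly_connected :: "('a \<times> 'a) set \<Rightarrow> 'a set \<Rightarrow> bool" where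
  "strongly_connected R C \<longleftrightarrow> (\<forall>x\<in>C. \<forall>y\<in>C. (x, y) \<in> (R \<inter> (C \<times> C))\<^sup>*)"

definition scc :: "'a set \<Rightarrow> ('a \<times> 'a) set \<Rightarrow> 'a set \<Rightarrow> bool" where
  "scc A R C \<longleftrightarrow> C \<noteq> {} \<and> C \<subseteq> A \<and> strongly_connected R C \<and>
     (\<forall>D. C \<subset> D \<and> D \<subseteq> A \<longrightarrow> \<not> strongly_connected R D)"

end

theory Submission
  imports Defs
begin

text \<open>Every strongly connected component is the class of arguments mutually reachable
  from any of its members. Inside an initial set S every argument reaches every other:
  otherwise the arguments of S reaching a fixed x would form a smaller non-empty admissible
  set. Since S defends itself, an attacker b of a \<in> S is attacked from S, so a reaches b
  and b lies in the component of S. Hence the component is \<open>{a}\<close> when S is unattacked,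
  contains both a and its attacker b \<noteq> a otherwise, and is also the component of any
  initial set attacking S.\<close>

definition strong_component :: "('a \<times> 'a) set \<Rightarrow> 'a \<Rightarrow> 'a set" where
  "strong_component R x = {y. (x, y) \<in> R\<^sup>* \<and> (y, x) \<in> R\<^sup>*}"

lemma strong_component_eq:
  "y \<in> strong_component R x \<Longrightarrow> strong_component R y = strong_component R x"
  unfolding strong_component_def by (auto intro: rtrancl_trans)

lemma rtrancl_Int_strong_component:
  assumes "(x, y) \<in> R\<^sup>*" and "(y, x) \<in> R\<^sup>*"
  shows "(x, y) \<in> (R \<inter> strong_component R x \<times> strong_component R x)\<^sup>*"
  using assms
proof (induction rule: rtrancl_induct)
  case base
  then show ?case by simp
next
  case (step y z)
  have "(y, x) \<in> R\<^sup>*"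
    using step by (meson converse_rtrancl_into_rtrancl)
  with step have "(x, y) \<in> (R \<inter> strong_component R x \<times> strong_component R x)\<^sup>*"
    and "(y, z) \<in> R \<inter> strong_component R x \<times> strong_component R x"
    by (auto simp: strong_component_def)
  then show ?case by (rule rtrancl_into_rtrancl)
qed

lemma strongly_connected_strong_component: "strongly_connected R (strong_component R x)"
  unfolding strongly_connected_def
proof (intro ballI)
  fix y z
  assume y: "y \<in> strong_component R x" and z: "z \<in> strong_component R x"
  have "(y, x) \<in> R\<^sup>*" "(x, y) \<in> R\<^sup>*" "(x, z) \<in> R\<^sup>*" "(z, x) \<in> R\<^sup>*"
    using y z by (auto simp: strong_component_def)
  then have "(y, x) \<in> (R \<inter> strong_component R y \<times> strong_component R y)\<^sup>*"
    and xz: "(x, z) \<in> (R \<inter> strong_component R x \<times> strong_component R x)\<^sup>*"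
    by (simp_all add: rtrancl_Int_strong_component)
  then have "(y, x) \<in> (R \<inter> strong_component R x \<times> strong_component R x)\<^sup>*"
    using strong_component_eq[OF y] by simp
  then show "(y, z) \<in> (R \<inter> strong_component R x \<times> strong_component R x)\<^sup>*"
    using xz by (rule rtrancl_trans)
qed

lemma strong_component_subset:
  assumes "R \<subseteq> A \<times> A" and "x \<in> A"
  shows "strong_component R x \<subseteq> A"
proof
  fix y
  assume "y \<in> strong_component R x"
  then have "y = x \<or> y \<in> Range (R\<^sup>+)"
    unfolding strong_component_def rtrancl_eq_or_trancl by blast
  then have "y = x \<or> y \<in> Range R"
    by simp
  with assms show "y \<in> A" by blast
qed

lemma scc_eq_strong_component:
  assumes "R \<subseteq> A \<times> A" and "scc A R C" and "x \<in> C"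
  shows "C = strong_component R x"
proof -
  have sc: "strongly_connected R C" and "C \<subseteq> A"
    using assms(2) unfolding scc_def by blast+
  have "C \<subseteq> strong_component R x"
  proof
    fix y
    assume "y \<in> C"
    with sc assms(3) have "(x, y) \<in> (R \<inter> C \<times> C)\<^sup>*" and "(y, x) \<in> (R \<inter> C \<times> C)\<^sup>*"
      by (auto simp: strongly_connected_def)
    then show "y \<in> strong_component R x"
      using rtrancl_mono[of "R \<inter> C \<times> C" R] by (auto simp: strong_component_def)
  qed
  moreover have "strong_component R x \<subseteq> A"
    using assms(3) \<open>C \<subseteq> A\<close> by (intro strong_component_subset[OF assms(1)]) blast
  ultimately show ?thesis
    using assms(2) strongly_connected_strong_component[of R x] unfolding scc_def by blast
qed

lemma scc_unique:
  assumes "R \<subseteq> A \<times> A" and "scc A R C" and "scc A R C'" and "x \<in> C" and "x \<in> C'"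
  shows "C' = C"
  using scc_eq_strong_component assms by metis

lemma strong_component_unattacked:
  assumes "\<forall>z. (z, x) \<notin> R"
  shows "strong_component R x = {x}"
proof -
  have "y = x" if "(y, x) \<in> R\<^sup>*" for y
    using that assms by (auto elim: rtranclE)
  then show ?thesis by (auto simp: strong_component_def)
qed

lemma initial_rtrancl:
  assumes "initial A R S" and "x \<in> S" and "y \<in> S"
  shows "(y, x) \<in> R\<^sup>*"
proof -
  define T where "T = {z \<in> S. (z, x) \<in> R\<^sup>*}"
  have adm: "admissible A R S"
    using assms(1) by (simp add: initial_def)
  have "admissible A R T"
    unfolding admissible_def
  proof (intro conjI ballI allI impI)
    show "T \<subseteq> A" and "conflict_free R T"
      using adm by (auto simp: T_def admissible_def conflict_free_def)
  next
    fix a w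
    assume a: "a \<in> T" and w: "(w, a) \<in> R"
    then obtain c where c: "c \<in> S" "(c, w) \<in> R"
      using adm unfolding admissible_def T_def by blast
    with a w have "(c, x) \<in> R\<^sup>*"
      by (auto simp: T_def intro: converse_rtrancl_into_rtrancl)
    with c show "\<exists>c\<in>T. (c, w) \<in> R"
      by (auto simp: T_def)
  qed
  moreover have "T \<noteq> {}" and "T \<subseteq> S"
    using assms(2) by (auto simp: T_def)
  ultimately have "T = S"
    using assms(1) unfolding initial_def by blast
  with assms(3) show ?thesis by (auto simp: T_def)
qed

lemma initial_attacker_in_strong_component:
  assumes "initial A R S" and "a \<in> S" and "(b, a) \<in> R"
  shows "b \<in> strong_component R a"
proof -
  obtain c where c: "c \<in> S" "(c, b) \<in> R"
    using assms unfolding initial_def admissible_def by blast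
  have "(a, c) \<in> R\<^sup>*"
    using initial_rtrancl[OF assms(1) c(1) assms(2)] .
  then have "(a, b) \<in> R\<^sup>*" using c(2) by (rule rtrancl_into_rtrancl)
  with assms(3) show ?thesis by (auto simp: strong_component_def)
qed

lemma initial_attacker_in_scc:
  assumes "R \<subseteq> A \<times> A" and "initial A R S" and "scc A R C" and "S \<subseteq> C"
    and "a \<in> S" and "(b, a) \<in> R"
  shows "b \<in> C"
proof -
  have "C = strong_component R a"
    using assms(4,5) by (intro scc_eq_strong_component[OF assms(1,3)]) blast
  with initial_attacker_in_strong_component[OF assms(2,5,6)] show ?thesis by simp
qed

lemma card_scc_initial_unattacked:
  assumes "R \<subseteq> A \<times> A" and "initial A R S" and "scc A R C" and "S \<subseteq> C"
    and "minus_set R S = {}"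
  shows "card C = 1"
proof -
  obtain a where a: "a \<in> S"
    using assms(2) unfolding initial_def by blast
  then have "C = strong_component R a"
    using assms(4) by (intro scc_eq_strong_component[OF assms(1,3)]) blast
  moreover have "\<forall>z. (z, a) \<notin> R"
    using a assms(5) by (auto simp: minus_set_def)
  ultimately show ?thesis
    by (simp add: strong_component_unattacked)
qed

lemma card_scc_initial_attacked:
  assumes "R \<subseteq> A \<times> A" and "finite A" and "initial A R S" and "scc A R C" and "S \<subseteq> C"
    and "minus_set R S \<noteq> {}"
  shows "card C > 1"
proof -
  obtain a b where "a \<in> S" and "(b, a) \<in> R"
    using assms(6) unfolding minus_set_def by blast
  moreover from this have "b \<noteq> a"
    using assms(3) unfolding initial_def admissible_def conflict_free_def by blast
  ultimately have "{a, b} \<subseteq> C" and "card {a, b} = 2"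
    using initial_attacker_in_scc[OF assms(1,3-5)] assms(5) by auto
  moreover have "finite C"
    using assms(2,4) finite_subset unfolding scc_def by blast
  ultimately show ?thesis
    using card_mono[of C "{a, b}"] by simp
qed

theorem proposition3:
  fixes A :: "'a set" and R :: "('a \<times> 'a) set" and S C :: "'a set"
  assumes "AF A R"
    and "initial A R S"
    and "scc A R C" and "S \<subseteq> C"
  shows "(unattacked A R S \<longrightarrow> card C = 1)
       \<and> (challenged A R S \<or> unchallenged A R S \<longrightarrow> card C > 1)
       \<and> (\<forall>S' C'. challenged A R S \<and> initial A R S' \<and> attacks_set R S' S
                  \<and> scc A R C' \<and> S' \<subseteq> C' \<longrightarrow> C' = C)"
proof (intro conjI impI allI)
  have R: "R \<subseteq> A \<times> A" and "finite A"
    using assms(1) by (simp_all add: AF_def)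
  show "card C = 1" if "unattacked A R S"
    using that card_scc_initial_unattacked[OF R assms(2-4)] by (simp add: unattacked_def)
  show "card C > 1" if "challenged A R S \<or> unchallenged A R S"
  proof -
    have "minus_set R S \<noteq> {}"
      using that unfolding challenged_def unchallenged_def attacks_set_def plus_set_def
        minus_set_def by blast
    then show ?thesis
      using card_scc_initial_attacked[OF R \<open>finite A\<close> assms(2-4)] by blast
  qed
  show "C' = C"
    if S': "challenged A R S \<and> initial A R S' \<and> attacks_set R S' S \<and> scc A R C' \<and> S' \<subseteq> C'"
    for S' C'
  proof -
    obtain a b where "b \<in> S'" and "a \<in> S" and "(b, a) \<in> R"
      using S' unfolding attacks_set_def plus_set_def by blast
    then have "b \<in> C" and "b \<in> C'"
      using initial_attacker_in_scc[OF R assms(2-4)] S' by auto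
    then show ?thesis
      using scc_unique[OF R assms(3)] S' by blast
  qed
qed

end
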